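(* Assume the standing assumptions in the context. For $(k,y)\in\mathbb{S}$ and $N\in\mathbb{N}$ let $V((k,y),N)$ be the number of visits of the walk to $(k,y)$ before time $N$. Then for each $K>0$ the family of random variables $V((k,y),N)/\sqrt{N}$, where the walk is started from $\xi(0)=z$, is uniformly integrable, uniformly over $N\in\mathbb{N}$, $z\in\mathbb{S}$, and $(k,y)\in\mathbb{S}$ with $|k|\le K\sqrt{N}$.
   Context: Fix $m\ge1$, $\mathbb{S}=\mathbb{Z}\times\{1,\dots,m\}$. Environment $(P_n,Q_n,R_n)_{n\in\mathbb{Z}}$, nonnegative $m\times m$ with $(P_n+Q_n+R_n)\mathbf{1}=\mathbf{1}$; the walk $\xi$ jumps from $(n,i)$ to $(n+1,j),(n,j),(n-1,j)$ with probabilities $P_n(i,j),R_n(i,j),Q_n(i,j)$. Norm $\|x\|=\max|x_i|$. Standing assumptions: ellipticity ($\bar\varepsilon>0$, $k_0$ with $\|R_n^{k_0}\|\le1-\bar\varepsilon$, $((I-R_n)^{-1}P_n)(i,j)\ge\bar\varepsilon$, $((I-R_n)^{-1}Q_n)(i,j)\ge\bar\varepsilon$); bounded potential ($\zeta_n=\lim_{a\to-\infty}\psi_{n,a}$, $\psi_{a,a}$ any stochastic, $\psi_{n,a}=(I-R_n-Q_n\psi_{n-1,a})^{-1}P_n$, $A_n=(I-R_n-Q_n\zeta_{n-1})^{-1}Q_n$, $|\log\|A_n\cdots A_1\||\le C_P$ for $n\ge1$, $|\log\|A_0\cdots A_{n+1}\||\le C_P$ for $n\le-1$); column vectors $\mathfrak{m}_n$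 with $\mathfrak{m}_n=P_n\mathfrak{m}_{n+1}+R_n\mathfrak{m}_n+Q_n\mathfrak{m}_{n-1}$, $|\mathfrak{m}_{n'}(i')-\mathfrak{m}_{n''}(i'')|\le K'$ for $|n'-n''|\le1$, $\sum_j\mathfrak{m}_n(j)/n\to m$ as $|n|\to\infty$; with $\zeta^-_n$ the unique stochastic sequence with $\zeta^-_n=(I-R_n-P_n\zeta^-_{n+1})^{-1}Q_n$ and $\alpha_n=Q_{n+1}(I-R_n-Q_n\zeta_{n-1})^{-1}$, positive bounded row vectors $\rho_n$ with $\rho_n=\rho_{n-1}P_{n-1}+\rho_nR_n+\rho_{n+1}Q_{n+1}$, $\rho_n=\rho_{n+1}\alpha_n$, $\rho_nP_n(\mathfrak{m}_{n+1}-\zeta^-_{n+1}\mathfrak{m}_n)=\frac1{2m}$; and a constant $a$ with $\lim_{N\to\pm\infty}\frac1{|N|}\sum_{n=0}^{N-1}\rho_n\mathbf{1}=a$. *)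

theory Defs
  imports "HOL-Analysis.Analysis"
begin

text \<open>Matrices are indexed by a finite type 'm with CARD('m) = m; the strip is int \<times> 'm.\<close>

type_synonym 'm mtx = "real^'m^'m"
type_synonym 'm env = "int \<Rightarrow> 'm mtx"

definition vnorm :: "real^'m::finite \<Rightarrow> real" where
  "vnorm x = Max (range (\<lambda>i. \<bar>x $ i\<bar>))"

definition mnorm :: "real^'m::finite^'m \<Rightarrow> real" where
  "mnorm A = Sup ((\<lambda>x. vnorm (A *v x)) ` {x. vnorm x = 1})"

definition one_vec :: "real^'m::finite" where
  "one_vec = (\<chi> i. 1)"

primrec mpow :: "'m::finite mtx \<Rightarrow> nat \<Rightarrow> 'm mtx" where
  "mpow A 0 = mat 1"
| "mpow A (Suc k) = mpow A k ** A"

definition stochastic :: "'m::finite mtx \<Rightarrow> bool" where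
  "stochastic A \<longleftrightarrow> (\<forall>i j. A $ i $ j \<ge> 0) \<and> A *v one_vec = one_vec"

text \<open>psi_seq P Q R S a k = \<psi>_{a+k,a}, started from \<psi>_{a,a} = S a.\<close>
primrec psi_seq :: "'m::finite env \<Rightarrow> 'm env \<Rightarrow> 'm env \<Rightarrow> 'm env \<Rightarrow> int \<Rightarrow> nat \<Rightarrow> 'm mtx" where
  "psi_seq P Q R S a 0 = S a"
| "psi_seq P Q R S a (Suc k) =
     matrix_inv (mat 1 - R (a + int k + 1) - Q (a + int k + 1) ** psi_seq P Q R S a k) ** P (a + int k + 1)"

primrec rprod :: "'m::finite env \<Rightarrow> int \<Rightarrow> nat \<Rightarrow> 'm mtx" where
  "rprod f a 0 = mat 1"
| "rprod f a (Suc k) = rprod f a k ** f (a - int k)"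

definition Amat :: "'m::finite env \<Rightarrow> 'm env \<Rightarrow> 'm env \<Rightarrow> int \<Rightarrow> 'm mtx" where
  "Amat Q R \<zeta> n = matrix_inv (mat 1 - R n - Q n ** \<zeta> (n - 1)) ** Q n"

definition alpha_mat :: "'m::finite env \<Rightarrow> 'm env \<Rightarrow> 'm env \<Rightarrow> int \<Rightarrow> 'm mtx" where
  "alpha_mat Q R \<zeta> n = Q (n + 1) ** matrix_inv (mat 1 - R n - Q n ** \<zeta> (n - 1))"

definition partial_sum :: "(int \<Rightarrow> real) \<Rightarrow> int \<Rightarrow> real" where
  "partial_sum f N = (if N \<ge> 0 then (\<Sum>n\<in>{0..N-1}. f n) else (\<Sum>n\<in>{N..-1}. f n))"

definition trans :: "'m::finite env \<Rightarrow> 'm env \<Rightarrow> 'm env \<Rightarrow> int \<times> 'm \<Rightarrow> int \<times> 'm \<Rightarrow> real" where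
  "trans P Q R s t =
     (let (n, i) = s; (n', j) = t in
       if n' = n + 1 then P n $ i $ j
       else if n' = n then R n $ i $ j
       else if n' = n - 1 then Q n $ i $ j
       else 0)"

text \<open>Trajectories (\<xi>(0),...,\<xi>(N-1)) started at z; all trajectories of positive probability
  stay in the box below, so this finite set carries the full law of the first N positions.\<close>
definition paths :: "(int \<times> 'm::finite) \<Rightarrow> nat \<Rightarrow> (int \<times> 'm) list set" where
  "paths z N = {xs. length xs = N \<and> (N > 0 \<longrightarrow> xs ! 0 = z) \<and>
                    set xs \<subseteq> {fst z - int N .. fst z + int N} \<times> UNIV}"

definition path_prob :: "'m::finite env \<Rightarrow> 'm env \<Rightarrow> 'm env \<Rightarrow> (int \<times> 'm) list \<Rightarrow> real" where
  "path_prob P Q R xs = (\<Prod>i<length xs - 1. trans P Q R (xs ! i) (xs ! (i + 1)))"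

definition visits :: "(int \<times> 'm) \<Rightarrow> (int \<times> 'm) list \<Rightarrow> nat" where
  "visits x xs = length (filter (\<lambda>s. s = x) xs)"

definition exp_visits :: "'m::finite env \<Rightarrow> 'm env \<Rightarrow> 'm env \<Rightarrow> (int \<times> 'm) \<Rightarrow> nat
                          \<Rightarrow> (int \<times> 'm) \<Rightarrow> (real \<Rightarrow> real) \<Rightarrow> real" where
  "exp_visits P Q R z N x g = (\<Sum>xs\<in>paths z N. path_prob P Q R xs * g (real (visits x xs)))"

end

theory Submission
  imports Defs
begin

text \<open>The walk is a Markov chain on the strip with transition operator \<open>T\<close>. The vectors
  \<open>mm\<close> give a \<open>T\<close>-harmonic function \<open>h (n, i) = mm n $ i\<close> with increments bounded by \<open>K'\<close>,
  so \<open>T\<^sup>t (h - h z)\<^sup>2 \<le> t K'\<^sup>2\<close>: in \<open>t\<close> steps the walk moves \<open>h\<close> by about \<open>K' \<surd>t\<close> at most.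
  As \<open>\<bar>h - h x\<bar>\<close> is subharmonic, its expectation along the walk never decreases, and
  ellipticity together with the normalisation of \<open>\<rho>\<close> (which forces \<open>h\<close> to increase by a
  fixed amount between neighbouring levels) makes every visit to \<open>x\<close> raise it by a fixed
  \<open>\<delta> > 0\<close> within boundedly many steps. Hence \<open>E\<^sub>z V(x, N) \<le> C \<surd>N\<close> uniformly in \<open>z\<close> and
  \<open>x\<close>; the Markov property turns this into \<open>E\<^sub>z[V(x, N)\<^sup>2] \<le> C' N\<close>, which gives uniform
  integrability of \<open>V(x, N) / \<surd>N\<close>. The bound is uniform in the target site.\<close>

section \<open>Nonnegative matrices\<close>

lemma matrix_vector_mult_entry: "(M *v x) $ i = (\<Sum>j\<in>UNIV. M $ i $ j * x $ j)"
  by (simp add: matrix_vector_mult_def)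

lemma matrix_matrix_mult_entry: "(A ** B) $ i $ j = (\<Sum>l\<in>UNIV. A $ i $ l * B $ l $ j)"
  by (simp add: matrix_matrix_mult_def)

lemma one_vec_nth [simp]: "one_vec $ i = 1"
  by (simp add: one_vec_def)

definition nonneg_mat :: "real^'m::finite^'m \<Rightarrow> bool" where
  "nonneg_mat M \<longleftrightarrow> (\<forall>i j. M $ i $ j \<ge> 0)"

lemma nonneg_mat_mpow: "nonneg_mat M \<Longrightarrow> nonneg_mat (mpow M s)"
  unfolding nonneg_mat_def
  by (induction s) (auto simp: mat_def matrix_matrix_mult_entry intro!: sum_nonneg)

lemma mpow_add: "mpow M (a + b) = mpow M a ** mpow M b"
  by (induction b) (simp_all add: matrix_mul_assoc)

lemma matrix_vector_mult_mono:
  "nonneg_mat M \<Longrightarrow> (\<And>j. x $ j \<le> y $ j) \<Longrightarrow> (M *v x) $ i \<le> (M *v y) $ i"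
  unfolding matrix_vector_mult_entry nonneg_mat_def by (intro sum_mono mult_left_mono) auto

lemma matrix_diff_mult: "(A - B) ** C = A ** C - B ** (C :: real^'k::finite^'m::finite)"
  by (simp add: vec_eq_iff matrix_matrix_mult_def left_diff_distrib sum_subtractf)

lemma mpow_row_sum_le_power:
  assumes M: "nonneg_mat M" and c: "\<And>i. (mpow M k *v one_vec) $ i \<le> c" "c \<ge> 0"
  shows "(mpow M (q * k) *v one_vec) $ i \<le> c ^ q"
proof (induction q arbitrary: i)
  case 0
  then show ?case by simp
next
  case (Suc q)
  have "Suc q * k = q * k + k" by simp
  then have "(mpow M (Suc q * k) *v one_vec) $ i = (mpow M (q * k) *v (mpow M k *v one_vec)) $ i"
    by (simp only: mpow_add matrix_vector_mul_assoc)
  also have "\<dots> \<le> (mpow M (q * k) *v (c *s one_vec)) $ i"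
    by (rule matrix_vector_mult_mono[OF nonneg_mat_mpow[OF M]]) (simp add: c)
  also have "\<dots> = c * (mpow M (q * k) *v one_vec) $ i"
    by (simp add: matrix_vector_mult_entry sum_distrib_left algebra_simps)
  also have "\<dots> \<le> c * c ^ q"
    by (rule mult_left_mono[OF Suc.IH c(2)])
  finally show ?case by simp
qed

text \<open>A fixed vector of \<open>M\<close> attains its sup-norm at some \<open>i\<^sub>0\<close>, where the row sum \<open>c < 1\<close> of
  \<open>M\<^sup>k\<close> forces it to vanish.\<close>
lemma invertible_mat_one_minus:
  assumes M: "nonneg_mat M" and c: "\<And>i. (mpow M k *v one_vec) $ i \<le> c" "c < 1"
  shows "invertible (mat 1 - M)"
proof -
  have "v = 0" if v: "(mat 1 - M) *v v = 0" for v
  proof -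
    have "M *v v = v" using v by (simp add: algebra_simps)
    then have fixed: "mpow M k *v v = v"
      by (induction k) (simp_all flip: matrix_vector_mul_assoc)
    have "Max (range (\<lambda>i. \<bar>v $ i\<bar>)) \<in> range (\<lambda>i. \<bar>v $ i\<bar>)"
      by (rule Max_in) auto
    then obtain i0 where max: "Max (range (\<lambda>i. \<bar>v $ i\<bar>)) = \<bar>v $ i0\<bar>"
      by blast
    have i0: "\<bar>v $ i\<bar> \<le> \<bar>v $ i0\<bar>" for i
      unfolding max[symmetric] by (rule Max_ge) auto
    have "\<bar>v $ i0\<bar> = \<bar>\<Sum>j\<in>UNIV. mpow M k $ i0 $ j * v $ j\<bar>"
      using fixed by (metis matrix_vector_mult_entry)
    also have "\<dots> \<le> (\<Sum>j\<in>UNIV. mpow M k $ i0 $ j * \<bar>v $ i0\<bar>)"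
      using nonneg_mat_mpow[OF M] i0 unfolding nonneg_mat_def
      by (intro order_trans[OF sum_abs] sum_mono) (simp add: abs_mult mult_left_mono)
    also have "\<dots> = (mpow M k *v one_vec) $ i0 * \<bar>v $ i0\<bar>"
      by (simp add: matrix_vector_mult_entry sum_distrib_right)
    also have "\<dots> \<le> c * \<bar>v $ i0\<bar>"
      by (rule mult_right_mono[OF c(1)]) simp
    finally have "\<bar>v $ i0\<bar> = 0"
      using c(2) by (smt (verit) mult_le_cancel_right1 abs_ge_zero)
    with i0 show "v = 0" by (metis abs_le_zero_iff vec_eq_iff zero_index)
  qed
  then have "\<exists>B. B ** (mat 1 - M) = mat 1"
    by (subst matrix_left_invertible_ker) blast
  then show ?thesis
    by (simp add: invertible_left_inverse)
qed

lemma matrix_inv_mat_one_minus: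
  assumes "nonneg_mat M" "\<And>i. (mpow M k *v one_vec) $ i \<le> c" "c < 1"
  shows "(mat 1 - M) ** matrix_inv (mat 1 - M) = mat 1"
    and "matrix_inv (mat 1 - M) ** (mat 1 - M) = mat 1"
proof -
  have "(mat 1 - M) ** matrix_inv (mat 1 - M) = mat 1 \<and> matrix_inv (mat 1 - M) ** (mat 1 - M) = mat 1"
    using invertible_mat_one_minus[OF assms] unfolding matrix_inv_def invertible_def by (rule someI_ex)
  then show "(mat 1 - M) ** matrix_inv (mat 1 - M) = mat 1"
    and "matrix_inv (mat 1 - M) ** (mat 1 - M) = mat 1"
    by blast+
qed

lemma row_sum_le_mnorm: "(A *v one_vec) $ i \<le> mnorm (A :: real^'m::finite^'m)"
proof -
  have bdd: "bdd_above ((\<lambda>x. vnorm (A *v x)) ` {x. vnorm x = 1})"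
  proof (rule bdd_aboveI2)
    fix y :: "real^'m" assume "y \<in> {x. vnorm x = 1}"
    moreover have "\<bar>y $ j\<bar> \<le> vnorm y" for j
      unfolding vnorm_def by (rule Max_ge) auto
    ultimately have y: "\<bar>y $ j\<bar> \<le> 1" for j
      by simp
    have "\<bar>(A *v y) $ i\<bar> \<le> (\<Sum>i\<in>UNIV. \<Sum>j\<in>UNIV. \<bar>A $ i $ j\<bar>)" for i
    proof -
      have "\<bar>(A *v y) $ i\<bar> \<le> (\<Sum>j\<in>UNIV. \<bar>A $ i $ j\<bar> * \<bar>y $ j\<bar>)"
        unfolding matrix_vector_mult_entry by (rule order_trans[OF sum_abs]) (simp add: abs_mult)
      also have "\<dots> \<le> (\<Sum>j\<in>UNIV. \<bar>A $ i $ j\<bar>)"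
        using y by (intro sum_mono) (simp add: mult_left_le)
      also have "\<dots> \<le> (\<Sum>i\<in>UNIV. \<Sum>j\<in>UNIV. \<bar>A $ i $ j\<bar>)"
        by (rule member_le_sum) (auto intro: sum_nonneg)
      finally show ?thesis .
    qed
    then show "vnorm (A *v y) \<le> (\<Sum>i\<in>UNIV. \<Sum>j\<in>UNIV. \<bar>A $ i $ j\<bar>)"
      unfolding vnorm_def by (subst Max_le_iff) auto
  qed
  have one: "vnorm (one_vec :: real^'m) = 1"
    unfolding vnorm_def by (simp add: image_constant_conv)
  have "(A *v one_vec) $ i \<le> vnorm (A *v one_vec)"
    unfolding vnorm_def by (rule order_trans[OF abs_ge_self Max_ge]) auto
  also have "\<dots> \<le> mnorm A"
    unfolding mnorm_def using one by (intro cSup_upper bdd) auto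
  finally show ?thesis .
qed

lemma exists_ge_average:
  fixes f :: "nat \<Rightarrow> real"
  assumes "0 \<le> c" "c < (\<Sum>s<S. f s)"
  shows "\<exists>s<S. f s \<ge> c / real S"
proof (rule ccontr)
  assume "\<not> ?thesis"
  then have "(\<Sum>s<S. f s) \<le> real (card {..<S}) * (c / real S)"
    by (intro sum_bounded_above) auto
  with assms show False
    by (cases "S = 0") auto
qed

lemma mpow_expansion:
  assumes "X = P + R ** X"
  shows "X = (\<Sum>s<n. mpow R s ** P) + mpow R n ** X"
proof (induction n)
  case (Suc n)
  have "mpow R n ** X = mpow R n ** P + mpow R (Suc n) ** X"
    by (subst assms) (simp add: matrix_add_ldistrib matrix_mul_assoc)
  with Suc show ?case by (simp add: add.assoc)
qed simp

context
  fixes R P Q :: "real^'m::finite^'m" and \<epsilon> :: real and k :: nat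
  assumes R: "nonneg_mat R"
    and rows: "(P + Q + R) *v one_vec = one_vec"
    and eps: "\<epsilon> > 0"
    and R_rows: "\<And>i. (mpow R k *v one_vec) $ i \<le> 1 - \<epsilon>"
    and eP: "\<And>i j. (matrix_inv (mat 1 - R) ** P) $ i $ j \<ge> \<epsilon>"
    and eQ: "\<And>i j. (matrix_inv (mat 1 - R) ** Q) $ i $ j \<ge> \<epsilon>"
begin

lemma resolvent_mult_eq: "matrix_inv (mat 1 - R) ** P = P + R ** (matrix_inv (mat 1 - R) ** P)"
proof -
  have "(mat 1 - R) ** (matrix_inv (mat 1 - R) ** P) = P"
    using matrix_inv_mat_one_minus[OF R R_rows] eps by (simp add: matrix_mul_assoc)
  then show ?thesis
    by (simp add: matrix_diff_mult algebra_simps)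
qed

lemma resolvent_mult_entry_le_1: "(matrix_inv (mat 1 - R) ** P) $ i $ j \<le> 1"
proof -
  define X where "X = matrix_inv (mat 1 - R) ** P"
  define Y where "Y = matrix_inv (mat 1 - R) ** Q"
  have "(X + Y) *v one_vec = matrix_inv (mat 1 - R) *v ((P + Q) *v one_vec)"
    by (simp add: X_def Y_def matrix_add_ldistrib matrix_vector_mul_assoc)
  also have "(P + Q) *v one_vec = (mat 1 - R) *v one_vec"
    using rows by (simp add: algebra_simps)
  finally have "(X + Y) *v one_vec = one_vec"
    using matrix_inv_mat_one_minus[OF R R_rows] eps by (simp add: matrix_vector_mul_assoc)
  then have "(\<Sum>l\<in>UNIV. X $ i $ l) + (\<Sum>l\<in>UNIV. Y $ i $ l) = 1"
    by (simp add: vec_eq_iff matrix_vector_mult_entry sum.distrib)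
  moreover have "X $ i $ j \<le> (\<Sum>l\<in>UNIV. X $ i $ l)"
    using eP eps unfolding X_def by (intro member_le_sum) (auto intro: order_trans[OF less_imp_le])
  moreover have "(\<Sum>l\<in>UNIV. Y $ i $ l) \<ge> 0"
    using eQ eps unfolding Y_def by (intro sum_nonneg) (auto intro: order_trans[OF less_imp_le])
  ultimately show ?thesis
    unfolding X_def by linarith
qed

text \<open>The entry \<open>\<ge> \<epsilon>\<close> of \<open>(I - R)\<inverse> P = \<Sum>\<^sub>s R\<^sup>s P\<close> splits into the first \<open>q k\<close> terms and a
  tail below \<open>\<epsilon>/2\<close>.\<close>
lemma exists_mpow_mult_entry_ge:
  assumes q: "(1 - \<epsilon>) ^ q < \<epsilon> / 2"
  shows "\<exists>s < q * k. (mpow R s ** P) $ i $ j \<ge> \<epsilon> / (2 * real (q * k))"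
proof -
  define X where "X = matrix_inv (mat 1 - R) ** P"
  have "(mpow R (q * k) ** X) $ i $ j \<le> (mpow R (q * k) *v one_vec) $ i"
    unfolding matrix_matrix_mult_entry matrix_vector_mult_entry
    using resolvent_mult_entry_le_1 nonneg_mat_mpow[OF R] unfolding nonneg_mat_def X_def
    by (intro sum_mono) (simp add: mult_left_le)
  also have "\<dots> \<le> (1 - \<epsilon>) ^ q"
  proof -
    have "0 \<le> (mpow R k *v one_vec) $ i"
      using matrix_vector_mult_mono[OF nonneg_mat_mpow[OF R], of 0 one_vec] by simp
    then show ?thesis
      using R_rows[of i] by (intro mpow_row_sum_le_power[OF R R_rows]) simp
  qed
  finally have "\<epsilon> / 2 < (\<Sum>s<q * k. (mpow R s ** P) $ i $ j)"
    using arg_cong[where f="\<lambda>A. A $ i $ j", OF mpow_expansion[OF resolvent_mult_eq, of "q * k"]]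
      eP[of i j] q
    unfolding X_def by simp
  then show ?thesis
    using exists_ge_average[where c="\<epsilon> / 2" and S="q * k" and f="\<lambda>s. (mpow R s ** P) $ i $ j"] eps
    by simp
qed

end

lemma stochastic_diff_entry_le:
  assumes "stochastic Z" "\<And>j. a $ i - b $ j \<le> c"
  shows "(a - Z *v b) $ i \<le> c"
proof -
  have rows: "(\<Sum>j\<in>UNIV. Z $ i $ j) = 1" and Z: "\<And>j. Z $ i $ j \<ge> 0"
    using assms(1) arg_cong[where f="\<lambda>v. v $ i"]
    unfolding stochastic_def by (auto simp: vec_eq_iff matrix_vector_mult_entry)
  have "(a - Z *v b) $ i = (\<Sum>j\<in>UNIV. Z $ i $ j * (a $ i - b $ j))"
    using rows
    by (simp add: matrix_vector_mult_entry right_diff_distrib sum_subtractf flip: sum_distrib_right)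
  also have "\<dots> \<le> (\<Sum>j\<in>UNIV. Z $ i $ j * c)"
    using assms(2) Z by (intro sum_mono mult_left_mono) auto
  finally show ?thesis
    by (simp add: rows flip: sum_distrib_right)
qed

section \<open>Path expectations of the walk\<close>

definition step_op :: "'m::finite env \<Rightarrow> 'm env \<Rightarrow> 'm env \<Rightarrow> (int \<times> 'm \<Rightarrow> real) \<Rightarrow> int \<times> 'm \<Rightarrow> real"
  where "step_op P Q R \<phi> z = (\<Sum>p\<in>{-1, 0, 1::int} \<times> UNIV.
           trans P Q R z (fst z + fst p, snd p) * \<phi> (fst z + fst p, snd p))"

definition path_exp :: "'m::finite env \<Rightarrow> 'm env \<Rightarrow> 'm env \<Rightarrow> int \<times> 'm \<Rightarrow> nat
                        \<Rightarrow> ((int \<times> 'm) list \<Rightarrow> real) \<Rightarrow> real"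
  where "path_exp P Q R z n F = (\<Sum>xs\<in>paths z n. path_prob P Q R xs * F xs)"

definition strip_box :: "int \<Rightarrow> nat \<Rightarrow> (int \<times> 'm) set"
  where "strip_box c r = {c - int r .. c + int r} \<times> UNIV"

lemma finite_strip_box [simp]: "finite (strip_box c r :: (int \<times> 'm::finite) set)"
  unfolding strip_box_def by simp

lemma step_op_expand:
  "step_op P Q R \<phi> (k, i) = (\<Sum>j\<in>UNIV. P k $ i $ j * \<phi> (k + 1, j))
     + (\<Sum>j\<in>UNIV. R k $ i $ j * \<phi> (k, j)) + (\<Sum>j\<in>UNIV. Q k $ i $ j * \<phi> (k - 1, j))"
  unfolding step_op_def sum.cartesian_product' by (simp add: trans_def algebra_simps)

lemma trans_nonzero_imp_adjacent: "trans P Q R z u \<noteq> 0 \<Longrightarrow> \<bar>fst u - fst z\<bar> \<le> 1"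
  unfolding trans_def by (cases z; cases u) (auto split: if_splits)

lemma step_op_eq_sum:
  fixes z :: "int \<times> 'm::finite"
  assumes "finite A" "strip_box (fst z) 1 \<subseteq> A"
  shows "step_op P Q R \<phi> z = (\<Sum>u\<in>A. trans P Q R z u * \<phi> u)"
proof -
  let ?f = "\<lambda>p::int \<times> 'm. (fst z + fst p, snd p)"
  let ?N = "?f ` ({-1, 0, 1} \<times> UNIV)"
  have "step_op P Q R \<phi> z = (\<Sum>u\<in>?N. trans P Q R z u * \<phi> u)"
    unfolding step_op_def by (subst sum.reindex) (auto simp: inj_on_def)
  also have "\<dots> = (\<Sum>u\<in>A. trans P Q R z u * \<phi> u)"
  proof (rule sum.mono_neutral_left[OF assms(1)])
    show "?N \<subseteq> A" using assms(2) unfolding strip_box_def by auto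
    show "\<forall>u\<in>A - ?N. trans P Q R z u * \<phi> u = 0"
    proof
      fix u assume u: "u \<in> A - ?N"
      have "trans P Q R z u = 0"
      proof (rule ccontr)
        assume "trans P Q R z u \<noteq> 0"
        from trans_nonzero_imp_adjacent[OF this] have "fst u - fst z \<in> {-1, 0, 1}"
          by auto
        then have "u \<in> ?N" by (intro image_eqI[where x="(fst u - fst z, snd u)"]) auto
        with u show False by simp
      qed
      then show "trans P Q R z u * \<phi> u = 0" by simp
    qed
  qed
  finally show ?thesis .
qed

lemma path_prob_Cons_Cons:
  "path_prob P Q R (z # u # ws) = trans P Q R z u * path_prob P Q R (u # ws)"
proof -
  have "path_prob P Q R (z # u # ws)
      = (\<Prod>i<Suc (length ws). trans P Q R ((z # u # ws) ! i) ((z # u # ws) ! (i + 1)))"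
    unfolding path_prob_def by simp
  also have "\<dots> = trans P Q R z u * path_prob P Q R (u # ws)"
    unfolding path_prob_def by (subst prod.lessThan_Suc_shift) simp
  finally show ?thesis .
qed

lemma path_prob_nonzero_imp_near:
  "path_prob P Q R (z # ys) \<noteq> 0 \<Longrightarrow> w \<in> set ys \<Longrightarrow> \<bar>fst w - fst z\<bar> \<le> int (length ys)"
proof (induction ys arbitrary: z)
  case Nil
  then show ?case by simp
next
  case (Cons u ws)
  then have tz: "trans P Q R z u \<noteq> 0" and nz: "path_prob P Q R (u # ws) \<noteq> 0"
    by (auto simp: path_prob_Cons_Cons)
  have adj: "\<bar>fst u - fst z\<bar> \<le> 1"
    using tz by (rule trans_nonzero_imp_adjacent)
  show ?case
  proof (cases "w = u")
    case False
    then have "\<bar>fst w - fst u\<bar> \<le> int (length ws)"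
      using Cons.prems(2) by (intro Cons.IH[OF nz]) simp
    with adj show ?thesis by simp
  qed (use adj in simp)
qed

lemma paths_0: "paths z 0 = {[]}"
  unfolding paths_def by auto

lemma paths_Suc:
  "paths z (Suc m) = Cons z ` {ys. set ys \<subseteq> strip_box (fst z) (Suc m) \<and> length ys = m}"
proof (rule set_eqI)
  fix xs
  show "xs \<in> paths z (Suc m)
    \<longleftrightarrow> xs \<in> Cons z ` {ys. set ys \<subseteq> strip_box (fst z) (Suc m) \<and> length ys = m}"
  proof
    assume "xs \<in> paths z (Suc m)"
    then obtain ys where "xs = z # ys" "length ys = m"
      and "set xs \<subseteq> {fst z - int (Suc m) .. fst z + int (Suc m)} \<times> UNIV"
      unfolding paths_def by (cases xs) auto
    then show "xs \<in> Cons z ` {ys. set ys \<subseteq> strip_box (fst z) (Suc m) \<and> length ys = m}"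
      unfolding strip_box_def by auto
  next
    assume "xs \<in> Cons z ` {ys. set ys \<subseteq> strip_box (fst z) (Suc m) \<and> length ys = m}"
    then obtain ys where xs: "xs = z # ys" and ys: "set ys \<subseteq> strip_box (fst z) (Suc m)" "length ys = m"
      by auto
    have "z \<in> strip_box (fst z) (Suc m)"
      unfolding strip_box_def by (cases z) auto
    with ys show "xs \<in> paths z (Suc m)"
      unfolding paths_def xs by (simp add: strip_box_def)
  qed
qed

text \<open>Trajectories of positive probability never leave \<open>strip_box (fst z) m\<close>, so the box in the
  definition of \<^const>\<open>paths\<close> may be replaced by any larger finite set.\<close>
lemma path_exp_Suc_eq_sum:
  assumes A: "finite A" "strip_box (fst z) m \<subseteq> A"
  shows "path_exp P Q R z (Suc m) F
           = (\<Sum>ys\<in>{ys. set ys \<subseteq> A \<and> length ys = m}. path_prob P Q R (z # ys) * F (z # ys))"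
proof -
  let ?S = "\<lambda>B. \<Sum>ys\<in>{ys. set ys \<subseteq> B \<and> length ys = m}. path_prob P Q R (z # ys) * F (z # ys)"
  have restrict: "?S B = ?S (strip_box (fst z) m)"
    if B: "finite B" "strip_box (fst z) m \<subseteq> B" for B
  proof (rule sum.mono_neutral_right)
    show "finite {ys. set ys \<subseteq> B \<and> length ys = m}"
      using B by (simp add: finite_lists_length_eq)
    show "{ys. set ys \<subseteq> strip_box (fst z) m \<and> length ys = m} \<subseteq> {ys. set ys \<subseteq> B \<and> length ys = m}"
      using B by auto
    show "\<forall>ys\<in>{ys. set ys \<subseteq> B \<and> length ys = m} - {ys. set ys \<subseteq> strip_box (fst z) m \<and> length ys = m}.
            path_prob P Q R (z # ys) * F (z # ys) = 0"
    proof
      fix ys assume "ys \<in> {ys. set ys \<subseteq> B \<and> length ys = m} - {ys. set ys \<subseteq> strip_box (fst z) m \<and> length ys = m}"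
      then obtain w where w: "w \<in> set ys" "w \<notin> strip_box (fst z) m" and len: "length ys = m"
        by auto
      have "path_prob P Q R (z # ys) = 0"
      proof (rule ccontr)
        assume "path_prob P Q R (z # ys) \<noteq> 0"
        from path_prob_nonzero_imp_near[OF this w(1)] len w(2) show False
          unfolding strip_box_def by (cases w) auto
      qed
      then show "path_prob P Q R (z # ys) * F (z # ys) = 0" by simp
    qed
  qed
  have "path_exp P Q R z (Suc m) F = ?S (strip_box (fst z) (Suc m))"
    unfolding path_exp_def paths_Suc by (subst sum.reindex) auto
  also have "\<dots> = ?S (strip_box (fst z) m)"
    by (rule restrict) (auto simp: strip_box_def)
  also have "\<dots> = ?S A"
    using restrict[OF A] by simp
  finally show ?thesis .
qed

lemma path_exp_0 [simp]: "path_exp P Q R z 0 F = F []"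
  unfolding path_exp_def paths_0 by (simp add: path_prob_def)

lemma truncation_le_sq:
  fixes v M N :: real
  assumes "M > 0" "N > 0"
  shows "(if v / sqrt N > M then v / sqrt N else 0) \<le> v\<^sup>2 / (N * M)"
proof (cases "v / sqrt N > M")
  case True
  then have "(v / sqrt N) * M \<le> (v / sqrt N)\<^sup>2"
    using assms unfolding power2_eq_square by (intro mult_left_mono) auto
  then have "v / sqrt N \<le> (v / sqrt N)\<^sup>2 / M"
    using assms(1) by (simp only: pos_le_divide_eq)
  also have "\<dots> = v\<^sup>2 / (N * M)"
    using assms by (simp add: power_divide)
  finally show ?thesis using True by simp
qed (use assms in simp)

section \<open>The transition operator and visit counts\<close>

locale strip_walk =
  fixes P Q R :: "'m::finite env"
  assumes nonneg: "\<And>n i j. P n $ i $ j \<ge> 0 \<and> Q n $ i $ j \<ge> 0 \<and> R n $ i $ j \<ge> 0"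
    and rowsum: "\<And>n. (P n + Q n + R n) *v one_vec = one_vec"
begin

abbreviation T :: "(int \<times> 'm \<Rightarrow> real) \<Rightarrow> int \<times> 'm \<Rightarrow> real"
  where "T \<equiv> step_op P Q R"

abbreviation E :: "int \<times> 'm \<Rightarrow> nat \<Rightarrow> ((int \<times> 'm) list \<Rightarrow> real) \<Rightarrow> real"
  where "E \<equiv> path_exp P Q R"

lemma trans_nonneg: "trans P Q R s t \<ge> 0"
  unfolding trans_def using nonneg by (cases s; cases t) auto

lemma nonneg_mat_R: "nonneg_mat (R n)"
  using nonneg unfolding nonneg_mat_def by auto

lemma row_sums: "(\<Sum>j\<in>UNIV. P k $ i $ j) + (\<Sum>j\<in>UNIV. R k $ i $ j) + (\<Sum>j\<in>UNIV. Q k $ i $ j) = 1"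
  using arg_cong[where f="\<lambda>v. v $ i", OF rowsum[of k]]
  by (simp add: matrix_vector_mult_entry sum.distrib)

lemma P_entry_le_1: "P k $ i $ j \<le> 1"
proof -
  have "P k $ i $ j \<le> (\<Sum>j\<in>UNIV. P k $ i $ j)"
    using nonneg by (intro member_le_sum) auto
  moreover have "(\<Sum>j\<in>UNIV. R k $ i $ j) \<ge> 0" "(\<Sum>j\<in>UNIV. Q k $ i $ j) \<ge> 0"
    using nonneg by (auto intro: sum_nonneg)
  ultimately show ?thesis using row_sums[of k i] by linarith
qed

lemma step_op_const [simp]: "T (\<lambda>w. c) = (\<lambda>w. c)"
proof
  fix z :: "int \<times> 'm"
  obtain k i where z: "z = (k, i)" by fastforce
  have "T (\<lambda>w. c) (k, i)
      = c * ((\<Sum>j\<in>UNIV. P k $ i $ j) + (\<Sum>j\<in>UNIV. R k $ i $ j) + (\<Sum>j\<in>UNIV. Q k $ i $ j))"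
    unfolding step_op_expand by (simp add: sum_distrib_left algebra_simps)
  then show "T (\<lambda>w. c) z = c" using row_sums z by simp
qed

lemma step_op_add: "T (\<lambda>w. \<phi> w + \<psi> w) z = T \<phi> z + T \<psi> z"
  unfolding step_op_def by (simp add: sum.distrib algebra_simps)

lemma step_op_scale: "T (\<lambda>w. c * \<phi> w) z = c * T \<phi> z"
  unfolding step_op_def by (simp add: sum_distrib_left algebra_simps)

lemma step_op_diff: "T (\<lambda>w. \<phi> w - \<psi> w) z = T \<phi> z - T \<psi> z"
  unfolding step_op_def by (simp add: sum_subtractf algebra_simps)

lemma step_op_sum: "finite S \<Longrightarrow> T (\<lambda>w. \<Sum>s\<in>S. f s w) z = (\<Sum>s\<in>S. T (f s) z)"
  by (induction S rule: finite_induct) (simp_all add: step_op_add)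

lemma step_op_mono_adjacent:
  "(\<And>w. \<bar>fst w - fst z\<bar> \<le> 1 \<Longrightarrow> \<phi> w \<le> \<psi> w) \<Longrightarrow> T \<phi> z \<le> T \<psi> z"
  unfolding step_op_def by (intro sum_mono mult_left_mono) (auto simp: trans_nonneg)

lemma step_op_mono: "(\<And>w. \<phi> w \<le> \<psi> w) \<Longrightarrow> T \<phi> z \<le> T \<psi> z"
  by (rule step_op_mono_adjacent)

lemma step_op_nonneg: "(\<And>w. \<psi> w \<ge> 0) \<Longrightarrow> T \<psi> z \<ge> 0"
  using step_op_mono[of "\<lambda>w. 0" \<psi> z] by simp

lemma step_op_abs_le: "\<bar>T \<phi> z\<bar> \<le> T (\<lambda>w. \<bar>\<phi> w\<bar>) z"
  unfolding step_op_def by (rule order_trans[OF sum_abs]) (simp add: abs_mult trans_nonneg)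

lemma funpow_step_op_const [simp]: "(T ^^ t) (\<lambda>w. c) = (\<lambda>w. c)"
  by (induction t) simp_all

lemma funpow_step_op_add: "(T ^^ t) (\<lambda>w. \<phi> w + \<psi> w) = (\<lambda>z. (T ^^ t) \<phi> z + (T ^^ t) \<psi> z)"
  by (induction t) (simp_all add: step_op_add)

lemma funpow_step_op_scale: "(T ^^ t) (\<lambda>w. c * \<phi> w) = (\<lambda>z. c * (T ^^ t) \<phi> z)"
  by (induction t) (simp_all add: step_op_scale)

lemma funpow_step_op_diff: "(T ^^ t) (\<lambda>w. \<phi> w - \<psi> w) = (\<lambda>z. (T ^^ t) \<phi> z - (T ^^ t) \<psi> z)"
  by (induction t) (simp_all add: step_op_diff)

lemma funpow_step_op_mono: "(\<And>w. \<phi> w \<le> \<psi> w) \<Longrightarrow> (T ^^ t) \<phi> z \<le> (T ^^ t) \<psi> z"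
  by (induction t arbitrary: z) (auto intro: step_op_mono)

lemma funpow_step_op_nonneg: "(\<And>w. \<psi> w \<ge> 0) \<Longrightarrow> (T ^^ t) \<psi> z \<ge> 0"
  using funpow_step_op_mono[of "\<lambda>w. 0" \<psi> t z] by simp

lemma path_exp_Suc: "E z (Suc n) F = T (\<lambda>u. E u n (\<lambda>ys. F (z # ys))) z"
proof (cases n)
  case 0
  have "E z (Suc 0) F = F [z]"
  proof -
    have nil: "{ys. set ys \<subseteq> strip_box (fst z) (Suc 0) \<and> length ys = 0} = {[]}" by auto
    show ?thesis
      unfolding path_exp_def paths_Suc nil by (simp add: path_prob_def)
  qed
  with 0 show ?thesis by simp
next
  case (Suc m)
  let ?A = "strip_box (fst z) (Suc m) :: (int \<times> 'm) set"
  let ?L = "\<lambda>n. {ys. set ys \<subseteq> ?A \<and> length ys = n}"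
  have "E z (Suc (Suc m)) F = (\<Sum>ys\<in>?L (Suc m). path_prob P Q R (z # ys) * F (z # ys))"
    by (rule path_exp_Suc_eq_sum) simp_all
  also have "\<dots> = (\<Sum>(ws, u)\<in>?L m \<times> ?A. path_prob P Q R (z # u # ws) * F (z # u # ws))"
    unfolding lists_length_Suc_eq
    by (subst sum.reindex) (auto simp: inj_on_def case_prod_beta intro!: sum.cong)
  also have "\<dots> = (\<Sum>u\<in>?A. trans P Q R z u * (\<Sum>ws\<in>?L m. path_prob P Q R (u # ws) * F (z # u # ws)))"
    unfolding sum.cartesian_product[symmetric]
    by (subst sum.swap) (simp add: path_prob_Cons_Cons sum_distrib_left mult.assoc)
  also have "\<dots> = (\<Sum>u\<in>?A. trans P Q R z u * E u (Suc m) (\<lambda>ys. F (z # ys)))"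
  proof (rule sum.cong[OF refl])
    fix u assume "u \<in> ?A"
    show "trans P Q R z u * (\<Sum>ws\<in>?L m. path_prob P Q R (u # ws) * F (z # u # ws))
        = trans P Q R z u * E u (Suc m) (\<lambda>ys. F (z # ys))"
    proof (cases "trans P Q R z u = 0")
      case False
      then have "strip_box (fst u) m \<subseteq> ?A"
        using trans_nonzero_imp_adjacent unfolding strip_box_def by fastforce
      then show ?thesis
        using path_exp_Suc_eq_sum[of ?A u m P Q R "\<lambda>ys. F (z # ys)"] by simp
    qed simp
  qed
  also have "\<dots> = T (\<lambda>u. E u (Suc m) (\<lambda>ys. F (z # ys))) z"
    by (rule step_op_eq_sum[symmetric]) (auto simp: strip_box_def)
  finally show ?thesis using Suc by simp
qed

lemma path_exp_add: "E z n (\<lambda>xs. F xs + G xs) = E z n F + E z n G"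
  unfolding path_exp_def by (simp add: sum.distrib algebra_simps)

lemma path_exp_scale: "E z n (\<lambda>xs. c * F xs) = c * E z n F"
  unfolding path_exp_def by (simp add: sum_distrib_left algebra_simps)

lemma path_exp_mono: "(\<And>xs. F xs \<le> G xs) \<Longrightarrow> E z n F \<le> E z n G"
  unfolding path_exp_def path_prob_def
  by (intro sum_mono mult_left_mono prod_nonneg) (auto simp: trans_nonneg)

lemma path_exp_const [simp]: "E z n (\<lambda>xs. c) = c"
  by (induction n arbitrary: z) (simp_all add: path_exp_Suc)

text \<open>The left-hand side only accounts for the trajectories that stay at level \<open>k\<close>.\<close>
lemma mpow_R_le_funpow_step_op:
  assumes "\<And>w. \<psi> w \<ge> 0"
  shows "(\<Sum>l\<in>UNIV. mpow (R k) s $ i $ l * \<psi> (k, l)) \<le> (T ^^ s) \<psi> (k, i)"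
  using assms
proof (induction s arbitrary: \<psi>)
  case 0
  have "(\<Sum>l\<in>UNIV. mpow (R k) 0 $ i $ l * \<psi> (k, l)) = (\<Sum>l\<in>UNIV. if i = l then \<psi> (k, l) else 0)"
    by (rule sum.cong) (auto simp: mat_def)
  then show ?case by simp
next
  case (Suc s)
  have R_mpow: "nonneg_mat (mpow (R k) s)"
    by (rule nonneg_mat_mpow[OF nonneg_mat_R])
  have "(\<Sum>l'\<in>UNIV. mpow (R k) (Suc s) $ i $ l' * \<psi> (k, l'))
      = (\<Sum>l\<in>UNIV. mpow (R k) s $ i $ l * (\<Sum>l'\<in>UNIV. R k $ l $ l' * \<psi> (k, l')))"
    by (simp add: matrix_matrix_mult_entry sum_distrib_left sum_distrib_right mult.assoc)
      (rule sum.swap)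
  also have "\<dots> \<le> (\<Sum>l\<in>UNIV. mpow (R k) s $ i $ l * T \<psi> (k, l))"
  proof (intro sum_mono mult_left_mono)
    fix l
    show "(\<Sum>l'\<in>UNIV. R k $ l $ l' * \<psi> (k, l')) \<le> T \<psi> (k, l)"
      unfolding step_op_expand using nonneg Suc.prems
      by (smt (verit, best) mult_nonneg_nonneg sum_nonneg)
    show "0 \<le> mpow (R k) s $ i $ l"
      using R_mpow by (simp add: nonneg_mat_def)
  qed
  also have "\<dots> \<le> (T ^^ s) (T \<psi>) (k, i)"
    using Suc.IH step_op_nonneg Suc.prems by blast
  finally show ?case by (simp add: funpow_Suc_right del: funpow.simps)
qed

lemma P_le_funpow_step_op_up:
  "(mpow (R k) s ** P k) $ i $ j \<le> (T ^^ Suc s) (indicator {(k + 1, j)}) (k, i)"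
proof -
  have "T (indicator {(k + 1, j)}) (k, l) = P k $ l $ j" for l
    unfolding step_op_expand by (simp add: indicator_def of_bool_def if_distrib cong: if_cong)
  then have "(mpow (R k) s ** P k) $ i $ j
      = (\<Sum>l\<in>UNIV. mpow (R k) s $ i $ l * T (indicator {(k + 1, j)}) (k, l))"
    by (simp add: matrix_matrix_mult_entry)
  also have "\<dots> \<le> (T ^^ Suc s) (indicator {(k + 1, j)}) (k, i)"
    by (simp add: funpow_Suc_right mpow_R_le_funpow_step_op step_op_nonneg del: funpow.simps)
  finally show ?thesis .
qed

lemma Q_le_funpow_step_op_down:
  "(mpow (R k) s ** Q k) $ i $ j \<le> (T ^^ Suc s) (indicator {(k - 1, j)}) (k, i)"
proof -
  have "T (indicator {(k - 1, j)}) (k, l) = Q k $ l $ j" for l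
    unfolding step_op_expand by (simp add: indicator_def of_bool_def if_distrib cong: if_cong)
  then have "(mpow (R k) s ** Q k) $ i $ j
      = (\<Sum>l\<in>UNIV. mpow (R k) s $ i $ l * T (indicator {(k - 1, j)}) (k, l))"
    by (simp add: matrix_matrix_mult_entry)
  also have "\<dots> \<le> (T ^^ Suc s) (indicator {(k - 1, j)}) (k, i)"
    by (simp add: funpow_Suc_right mpow_R_le_funpow_step_op step_op_nonneg del: funpow.simps)
  finally show ?thesis .
qed

lemma uniform_neighbour_reach:
  assumes eps: "\<epsilon> > 0"
    and R_rows: "\<And>n i. (mpow (R n) k0 *v one_vec) $ i \<le> 1 - \<epsilon>"
    and ell_P: "\<And>n i j. (matrix_inv (mat 1 - R n) ** P n) $ i $ j \<ge> \<epsilon>"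
    and ell_Q: "\<And>n i j. (matrix_inv (mat 1 - R n) ** Q n) $ i $ j \<ge> \<epsilon>"
  obtains p S where "p > 0"
    and "\<And>k i j. \<exists>s<S. (T ^^ Suc s) (indicator {(k + 1, j)}) (k, i) \<ge> p"
    and "\<And>k i j. \<exists>s<S. (T ^^ Suc s) (indicator {(k - 1, j)}) (k, i) \<ge> p"
proof -
  obtain q where q: "(1 - \<epsilon>) ^ q < \<epsilon> / 2"
    using real_arch_pow_inv[of "\<epsilon> / 2" "1 - \<epsilon>"] eps by auto
  have up: "\<exists>s<q * k0. (mpow (R n) s ** P n) $ i $ j \<ge> \<epsilon> / (2 * real (q * k0))" for n i j
    by (rule exists_mpow_mult_entry_ge[OF nonneg_mat_R rowsum eps R_rows ell_P ell_Q q])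
  moreover have "(Q n + P n + R n) *v one_vec = one_vec" for n
    using rowsum[of n] by (simp add: add.commute add.left_commute)
  then have down: "\<exists>s<q * k0. (mpow (R n) s ** Q n) $ i $ j \<ge> \<epsilon> / (2 * real (q * k0))" for n i j
    by (rule exists_mpow_mult_entry_ge[OF nonneg_mat_R _ eps R_rows ell_Q ell_P q])
  obtain i0 :: 'm where True by blast
  have "q * k0 > 0" using up[of 0 i0 i0] by (metis gr_zeroI not_less_zero)
  then have "\<epsilon> / (2 * real (q * k0)) > 0" using eps by simp
  then show ?thesis
    using that up down P_le_funpow_step_op_up Q_le_funpow_step_op_down by (meson order_trans)
qed

lemma funpow_step_op_indicator_le:
  assumes "\<And>u. \<phi> u \<ge> 0"
  shows "\<phi> w * (T ^^ t) (indicator {w}) z \<le> (T ^^ t) \<phi> z"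
proof -
  have "(T ^^ t) (\<lambda>u. \<phi> w * indicator {w} u) z \<le> (T ^^ t) \<phi> z"
    using assms by (intro funpow_step_op_mono) (simp add: indicator_def)
  then show ?thesis by (simp add: funpow_step_op_scale)
qed

lemma funpow_step_op_indicator_chain:
  "(T ^^ a) (indicator {w}) z * (T ^^ b) (indicator {w'}) w \<le> (T ^^ (a + b)) (indicator {w'}) z"
  using funpow_step_op_indicator_le[of "(T ^^ b) (indicator {w'})" w a z]
  by (simp add: funpow_add funpow_step_op_nonneg mult.commute)

lemma funpow_step_op_indicator_le_1: "(T ^^ t) (indicator {w}) z \<le> 1"
  using funpow_step_op_mono[of "indicator {w}" "\<lambda>_. 1" t z] by (simp add: indicator_def)

lemma row_vector_mult_P_bounds:
  assumes "\<And>l. 0 \<le> \<rho> $ l \<and> \<rho> $ l \<le> B"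
  shows "0 \<le> (\<rho> v* P n) $ i \<and> (\<rho> v* P n) $ i \<le> real CARD('m) * B"
proof -
  have terms: "0 \<le> \<rho> $ l * P n $ l $ i" "\<rho> $ l * P n $ l $ i \<le> B" for l
    using assms[of l] nonneg[of n l i] P_entry_le_1[of n l i] mult_mono[of "\<rho> $ l" B "P n $ l $ i" 1]
    by auto
  have "(\<rho> v* P n) $ i = (\<Sum>l\<in>UNIV. \<rho> $ l * P n $ l $ i)"
    unfolding vector_matrix_mult_def by simp
  moreover have "(\<Sum>l\<in>UNIV. \<rho> $ l * P n $ l $ i) \<le> (\<Sum>l\<in>(UNIV::'m set). B)"
    using terms by (intro sum_mono)
  ultimately show ?thesis
    using terms by (simp add: sum_nonneg)
qed

text \<open>If every increment \<open>mm (n + 1) $ i - mm n $ j\<close> were below \<open>c\<^sub>0\<close>, the left-hand side of the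
  normalisation would be at most \<open>m\<^sup>2 B c\<^sub>0 = 1/(4m)\<close>.\<close>
lemma increment_gap:
  fixes \<rho> mm :: "int \<Rightarrow> real^'m" and \<zeta>m :: "'m env"
  assumes zm_stoch: "\<And>n. stochastic (\<zeta>m n)"
    and rho_pos: "\<And>n i. \<rho> n $ i > 0"
    and rho_le: "\<And>n i. \<rho> n $ i \<le> B"
    and rho_norm: "\<And>n. (\<rho> n v* P n) \<bullet> (mm (n + 1) - \<zeta>m (n + 1) *v mm n) = 1 / (2 * real CARD('m))"
  shows "\<exists>c0>0. \<forall>n. \<exists>i j. mm (n + 1) $ i - mm n $ j \<ge> c0"
proof -
  define m where "m = real CARD('m)"
  have "m \<ge> 1" unfolding m_def by simp
  obtain i0 :: 'm where True by blast
  have "B > 0" using rho_le[of 0 i0] rho_pos[of 0 i0] by linarith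
  define c0 where "c0 = 1 / (4 * m^3 * B)"
  have "c0 > 0" unfolding c0_def using \<open>B > 0\<close> \<open>m \<ge> 1\<close> by simp
  have "\<exists>i j. mm (n + 1) $ i - mm n $ j \<ge> c0" for n
  proof (rule ccontr)
    assume "\<not> ?thesis"
    then have small: "mm (n + 1) $ i - mm n $ j \<le> c0" for i j
      by (meson less_imp_le not_le)
    define w where "w = \<rho> n v* P n"
    define d where "d = mm (n + 1) - \<zeta>m (n + 1) *v mm n"
    have d: "d $ i \<le> c0" for i
      unfolding d_def using small by (intro stochastic_diff_entry_le zm_stoch)
    have w: "0 \<le> w $ i \<and> w $ i \<le> m * B" for i
      unfolding w_def m_def using rho_pos rho_le
      by (intro row_vector_mult_P_bounds) (simp add: less_imp_le)
    have "w \<bullet> d = (\<Sum>i\<in>UNIV. w $ i * d $ i)"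
      by (simp add: inner_vec_def)
    also have "\<dots> \<le> (\<Sum>i\<in>(UNIV::'m set). (m * B) * c0)"
    proof (rule sum_mono)
      fix i
      have "w $ i * d $ i \<le> w $ i * c0"
        using w d by (intro mult_left_mono) auto
      also have "\<dots> \<le> (m * B) * c0"
        using w \<open>c0 > 0\<close> by (intro mult_right_mono) auto
      finally show "w $ i * d $ i \<le> (m * B) * c0" .
    qed
    also have "\<dots> = 1 / (4 * m)"
      unfolding c0_def using \<open>B > 0\<close> \<open>m \<ge> 1\<close> by (simp add: m_def[symmetric] power3_eq_cube field_simps)
    also have "\<dots> < 1 / (2 * m)" using \<open>m \<ge> 1\<close> by (simp add: field_simps)
    finally show False
      using rho_norm[of n] unfolding w_def d_def m_def by simp
  qed
  with \<open>c0 > 0\<close> show ?thesis by blast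
qed

lemma visits_Cons: "real (visits x (z # ys)) = indicator {x} z + real (visits x ys)"
  unfolding visits_def by (simp add: indicator_def)

lemma path_exp_visits_Suc:
  "E z (Suc n) (\<lambda>xs. real (visits x xs))
     = indicator {x} z + T (\<lambda>u. E u n (\<lambda>xs. real (visits x xs))) z"
  by (simp add: path_exp_Suc visits_Cons path_exp_add step_op_add)

lemma path_exp_visits_sq_Suc:
  "E z (Suc n) (\<lambda>xs. (real (visits x xs))\<^sup>2)
     = indicator {x} z + 2 * indicator {x} z * T (\<lambda>u. E u n (\<lambda>xs. real (visits x xs))) z
       + T (\<lambda>u. E u n (\<lambda>xs. (real (visits x xs))\<^sup>2)) z"
proof -
  let ?a = "indicator {x} z :: real"
  have "(\<lambda>ys. (real (visits x (z # ys)))\<^sup>2)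
      = (\<lambda>ys. ?a + ((2 * ?a) * real (visits x ys) + (real (visits x ys))\<^sup>2))"
    by (simp add: fun_eq_iff visits_Cons power2_eq_square algebra_simps indicator_def)
  then show ?thesis
    by (simp add: path_exp_Suc path_exp_add path_exp_scale step_op_add step_op_scale)
qed

lemma path_exp_visits_sq_le:
  assumes G: "\<And>m u. m \<le> N \<Longrightarrow> E u m (\<lambda>xs. real (visits x xs)) \<le> G"
    and "n \<le> N"
  shows "E z n (\<lambda>xs. (real (visits x xs))\<^sup>2) \<le> (1 + 2 * G) * E z n (\<lambda>xs. real (visits x xs))"
  using \<open>n \<le> N\<close>
proof (induction n arbitrary: z)
  case (Suc n)
  let ?e = "\<lambda>u. E u n (\<lambda>xs. real (visits x xs))"
  let ?a = "indicator {x} z :: real"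
  have "?a + T ?e z \<le> G"
    using G[OF Suc.prems, of z] by (simp add: path_exp_visits_Suc)
  moreover have "?a \<ge> 0" by simp
  ultimately have "T ?e z \<le> G"
    by linarith
  then have "2 * ?a * T ?e z \<le> 2 * ?a * G"
    by (simp add: mult_left_mono)
  moreover have "T (\<lambda>u. E u n (\<lambda>xs. (real (visits x xs))\<^sup>2)) z \<le> (1 + 2 * G) * T ?e z"
    using Suc by (simp flip: step_op_scale) (intro step_op_mono, simp)
  ultimately show ?case
    by (simp add: path_exp_visits_sq_Suc path_exp_visits_Suc algebra_simps)
qed (simp add: visits_def)

context
  fixes C :: real
  assumes bound: "\<And>z x n. E z n (\<lambda>xs. real (visits x xs)) \<le> C * sqrt (real n)"
begin

lemma sqrt_visits_bound_ge_1: "C \<ge> 1"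
proof -
  obtain w :: "int \<times> 'm" where True by blast
  show ?thesis
    using bound[where z=w and n=1 and x=w] path_exp_visits_Suc[where z=w and n=0 and x=w]
    by (simp add: visits_def)
qed

lemma path_exp_visits_sq_le_linear:
  assumes "N \<ge> 1"
  shows "E z N (\<lambda>xs. (real (visits x xs))\<^sup>2) \<le> (C + 2 * C\<^sup>2) * real N"
proof -
  have "sqrt (real N) \<le> sqrt (real N * real N)"
    using \<open>N \<ge> 1\<close> by (intro real_sqrt_le_mono) simp
  then have sqrt_le: "sqrt (real N) \<le> real N"
    by simp
  have G: "E u m (\<lambda>xs. real (visits x xs)) \<le> C * sqrt (real N)" if "m \<le> N" for m u
  proof -
    have "C * sqrt (real m) \<le> C * sqrt (real N)"
      using that sqrt_visits_bound_ge_1 by (intro mult_left_mono) auto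
    with bound[where z=u and n=m and x=x] show ?thesis by linarith
  qed
  have "E z N (\<lambda>xs. (real (visits x xs))\<^sup>2)
      \<le> (1 + 2 * (C * sqrt (real N))) * E z N (\<lambda>xs. real (visits x xs))"
    by (rule path_exp_visits_sq_le[OF G order.refl])
  also have "\<dots> \<le> (1 + 2 * (C * sqrt (real N))) * (C * sqrt (real N))"
    by (rule mult_left_mono[OF G[OF order.refl]]) (use sqrt_visits_bound_ge_1 in simp)
  also have "\<dots> = C * sqrt (real N) + 2 * C\<^sup>2 * real N"
    by (simp add: power2_eq_square algebra_simps real_sqrt_mult_self)
  also have "\<dots> \<le> (C + 2 * C\<^sup>2) * real N"
    using mult_left_mono[OF sqrt_le, of C] sqrt_visits_bound_ge_1 by (simp add: algebra_simps)
  finally show ?thesis .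
qed

lemma visits_uniformly_integrable:
  "\<forall>e>0. \<exists>M. \<forall>N z x. N \<ge> 1 \<longrightarrow>
     exp_visits P Q R z N x (\<lambda>v. if v / sqrt (real N) > M then v / sqrt (real N) else 0) \<le> e"
proof (intro allI impI)
  fix e :: real assume "e > 0"
  have "C + 2 * C\<^sup>2 > 0"
    using sqrt_visits_bound_ge_1 by (simp add: add_pos_nonneg)
  define M where "M = (C + 2 * C\<^sup>2) / e"
  have "M > 0" unfolding M_def using \<open>C + 2 * C\<^sup>2 > 0\<close> \<open>e > 0\<close> by simp
  have "exp_visits P Q R z N x (\<lambda>v. if v / sqrt (real N) > M then v / sqrt (real N) else 0) \<le> e"
    if "N \<ge> 1" for N z x
  proof -
    have "exp_visits P Q R z N x (\<lambda>v. if v / sqrt (real N) > M then v / sqrt (real N) else 0)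
        \<le> E z N (\<lambda>xs. (real (visits x xs))\<^sup>2 / (real N * M))"
      unfolding exp_visits_def path_exp_def[symmetric]
      using \<open>M > 0\<close> \<open>N \<ge> 1\<close> by (intro path_exp_mono truncation_le_sq) auto
    also have "\<dots> = E z N (\<lambda>xs. (real (visits x xs))\<^sup>2) / (real N * M)"
      using path_exp_scale[of z N "1 / (real N * M)"] by simp
    also have "\<dots> \<le> (C + 2 * C\<^sup>2) * real N / (real N * M)"
      using path_exp_visits_sq_le_linear[OF \<open>N \<ge> 1\<close>] \<open>M > 0\<close> by (intro divide_right_mono) auto
    also have "\<dots> = e"
      using \<open>N \<ge> 1\<close> \<open>e > 0\<close> \<open>C + 2 * C\<^sup>2 > 0\<close> unfolding M_def by simp
    finally show ?thesis .
  qed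
  then show "\<exists>M. \<forall>N z x. N \<ge> 1 \<longrightarrow>
      exp_visits P Q R z N x (\<lambda>v. if v / sqrt (real N) > M then v / sqrt (real N) else 0) \<le> e"
    by blast
qed

end

end

section \<open>A harmonic coordinate\<close>

locale harmonic_strip_walk = strip_walk P Q R for P Q R :: "'m::finite env" +
  fixes mm :: "int \<Rightarrow> real^'m" and K :: real
  assumes harmonic: "\<And>n. mm n = P n *v mm (n + 1) + R n *v mm n + Q n *v mm (n - 1)"
    and lipschitz: "\<And>n' n'' i' i''. \<bar>n' - n''\<bar> \<le> 1 \<Longrightarrow> \<bar>mm n' $ i' - mm n'' $ i''\<bar> \<le> K"
begin

definition h :: "int \<times> 'm \<Rightarrow> real"
  where "h w = mm (fst w) $ snd w"

lemma K_nonneg: "K \<ge> 0"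
  using lipschitz[of 0 0] by fastforce

lemma step_op_h: "T h = h"
proof
  fix z :: "int \<times> 'm"
  obtain k i where z: "z = (k, i)" by fastforce
  have "mm k $ i = (P k *v mm (k + 1)) $ i + (R k *v mm k) $ i + (Q k *v mm (k - 1)) $ i"
    using harmonic[of k] by (metis vector_add_component)
  then show "T h z = h z"
    unfolding z step_op_expand h_def by (simp add: matrix_vector_mult_entry)
qed

lemma abs_h_le_step_op: "\<bar>h z - c\<bar> \<le> T (\<lambda>w. \<bar>h w - c\<bar>) z"
  using step_op_abs_le[of "\<lambda>w. h w - c" z] by (simp add: step_op_diff step_op_h)

lemma funpow_abs_h_mono:
  assumes "t \<le> t'"
  shows "(T ^^ t) (\<lambda>w. \<bar>h w - c\<bar>) z \<le> (T ^^ t') (\<lambda>w. \<bar>h w - c\<bar>) z"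
proof -
  have "(T ^^ t) (\<lambda>w. \<bar>h w - c\<bar>) z \<le> (T ^^ (t + d)) (\<lambda>w. \<bar>h w - c\<bar>) z" for d
  proof (induction d arbitrary: z)
    case (Suc d)
    have "(T ^^ (t + d)) (\<lambda>w. \<bar>h w - c\<bar>) z \<le> (T ^^ (t + d)) (T (\<lambda>w. \<bar>h w - c\<bar>)) z"
      by (rule funpow_step_op_mono) (rule abs_h_le_step_op)
    then show ?case
      using Suc.IH[of z] by (simp add: funpow_Suc_right del: funpow.simps)
  qed simp
  then show ?thesis
    using assms by (metis le_add_diff_inverse)
qed

lemma step_op_sq_h: "T (\<lambda>w. (h w - b)\<^sup>2) z \<le> (h z - b)\<^sup>2 + K\<^sup>2"
proof -
  have "T (\<lambda>w. (h w - h z)\<^sup>2) z \<le> T (\<lambda>w. K\<^sup>2) z"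
  proof (rule step_op_mono_adjacent)
    fix w :: "int \<times> 'm" assume "\<bar>fst w - fst z\<bar> \<le> 1"
    then have "\<bar>h w - h z\<bar> \<le> K" unfolding h_def by (rule lipschitz)
    then show "(h w - h z)\<^sup>2 \<le> K\<^sup>2"
      by (metis abs_ge_zero order_trans power2_abs power_mono)
  qed
  moreover have "(\<lambda>w. (h w - b)\<^sup>2)
      = (\<lambda>w. (h w - h z)\<^sup>2 + (2 * (h z - b) * (h w - h z) + (h z - b)\<^sup>2))"
    by (simp add: fun_eq_iff power2_eq_square algebra_simps)
  ultimately show ?thesis
    by (simp add: step_op_add step_op_scale step_op_diff step_op_h)
qed

lemma funpow_sq_h: "(T ^^ t) (\<lambda>w. (h w - b)\<^sup>2) z \<le> (h z - b)\<^sup>2 + real t * K\<^sup>2"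
proof (induction t arbitrary: z)
  case (Suc t)
  have "(T ^^ Suc t) (\<lambda>w. (h w - b)\<^sup>2) z \<le> (T ^^ t) (\<lambda>w. (h w - b)\<^sup>2 + K\<^sup>2) z"
    unfolding funpow_Suc_right comp_def by (intro funpow_step_op_mono step_op_sq_h)
  with Suc.IH[of z] show ?case
    by (simp add: funpow_step_op_add algebra_simps)
qed simp

text \<open>Cauchy-Schwarz for the positive, unital operator \<open>T\<^sup>t\<close>: expand \<open>0 \<le> T\<^sup>t (\<bar>g\<bar> - a)\<^sup>2\<close>
  at \<open>a = T\<^sup>t \<bar>g\<bar>\<close>.\<close>
lemma funpow_step_op_abs_sq: "((T ^^ t) (\<lambda>w. \<bar>g w\<bar>) z)\<^sup>2 \<le> (T ^^ t) (\<lambda>w. (g w)\<^sup>2) z"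
proof -
  define a where "a = (T ^^ t) (\<lambda>w. \<bar>g w\<bar>) z"
  have "(\<lambda>w. (\<bar>g w\<bar> - a)\<^sup>2) = (\<lambda>w. (g w)\<^sup>2 - 2 * a * \<bar>g w\<bar> + a\<^sup>2)"
    by (simp add: fun_eq_iff power2_eq_square algebra_simps)
  moreover have "0 \<le> (T ^^ t) (\<lambda>w. (\<bar>g w\<bar> - a)\<^sup>2) z"
    by (rule funpow_step_op_nonneg) simp
  ultimately show ?thesis
    unfolding a_def
    by (simp add: funpow_step_op_add funpow_step_op_diff funpow_step_op_scale power2_eq_square)
qed

lemma funpow_abs_h_le_sqrt: "(T ^^ t) (\<lambda>w. \<bar>h w - h z\<bar>) z \<le> K * sqrt (real t)"
proof -
  have "((T ^^ t) (\<lambda>w. \<bar>h w - h z\<bar>) z)\<^sup>2 \<le> real t * K\<^sup>2"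
    using funpow_step_op_abs_sq[of t "\<lambda>w. h w - h z" z] funpow_sq_h[of t "h z" z] by simp
  then show ?thesis
    using K_nonneg real_le_rsqrt by (fastforce simp: real_sqrt_mult mult.commute)
qed

lemma funpow_abs_h_increment:
  "(T ^^ a) (\<lambda>w. \<bar>h w - c\<bar>) z - (T ^^ b) (\<lambda>w. \<bar>h w - c\<bar>) z \<le> K * (sqrt (real a) + sqrt (real b))"
proof -
  let ?g = "\<lambda>w. \<bar>h w - h z\<bar>" and ?d = "\<bar>h z - c\<bar>"
  have "(T ^^ a) (\<lambda>w. \<bar>h w - c\<bar>) z \<le> (T ^^ a) (\<lambda>w. ?g w + ?d) z"
    by (intro funpow_step_op_mono) linarith
  moreover have "(T ^^ b) (\<lambda>w. ?d - ?g w) z \<le> (T ^^ b) (\<lambda>w. \<bar>h w - c\<bar>) z"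
    by (intro funpow_step_op_mono) linarith
  ultimately show ?thesis
    using funpow_abs_h_le_sqrt[of a z] funpow_abs_h_le_sqrt[of b z]
    by (simp add: funpow_step_op_add funpow_step_op_diff algebra_simps)
qed

text \<open>A discrete Tanaka formula: each visit to \<open>x\<close> increases the expectation of the subharmonic
  function \<open>\<bar>h - h x\<bar>\<close>, after \<open>L\<close> further steps, by at least \<open>\<delta>\<close>.\<close>
lemma visits_le_increment_sum:
  assumes spread: "\<delta> \<le> (T ^^ L) (\<lambda>w. \<bar>h w - h x\<bar>) x"
  shows "\<delta> * E z n (\<lambda>xs. real (visits x xs))
     \<le> (\<Sum>j<L. (T ^^ (n + j)) (\<lambda>w. \<bar>h w - h x\<bar>) z - (T ^^ j) (\<lambda>w. \<bar>h w - h x\<bar>) z)"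
proof (induction n arbitrary: z)
  case (Suc n)
  define f where "f = (\<lambda>w. \<bar>h w - h x\<bar>)"
  define D where "D = (\<lambda>u. \<Sum>j<L. (T ^^ (n + j)) f u - (T ^^ j) f u)"
  have IH: "\<delta> * E u n (\<lambda>xs. real (visits x xs)) \<le> D u" for u
    using Suc.IH[of u] unfolding D_def f_def .
  have "(\<Sum>j<L. (T ^^ (Suc n + j)) f z - (T ^^ j) f z)
      = (\<Sum>j<L. ((T ^^ Suc (n + j)) f z - (T ^^ Suc j) f z) + ((T ^^ Suc j) f z - (T ^^ j) f z))"
    by simp
  also have "\<dots> = T D z + ((T ^^ L) f z - f z)"
  proof -
    have "T D z = (\<Sum>j<L. (T ^^ Suc (n + j)) f z - (T ^^ Suc j) f z)"
      unfolding D_def by (simp add: step_op_sum step_op_diff)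
    moreover have "(\<Sum>j<L. (T ^^ Suc j) f z - (T ^^ j) f z) = (T ^^ L) f z - f z"
      by (subst sum_lessThan_telescope) simp
    ultimately show ?thesis
      by (simp only: sum.distrib)
  qed
  finally have telescope:
    "(\<Sum>j<L. (T ^^ (Suc n + j)) f z - (T ^^ j) f z) = T D z + ((T ^^ L) f z - f z)" .
  have visit: "\<delta> * indicator {x} z \<le> (T ^^ L) f z - f z"
  proof (cases "z = x")
    case False
    then show ?thesis
      using funpow_abs_h_mono[of 0 L "h x" z] unfolding f_def by simp
  qed (use spread f_def in simp)
  have "\<delta> * E z (Suc n) (\<lambda>xs. real (visits x xs))
      = \<delta> * indicator {x} z + T (\<lambda>u. \<delta> * E u n (\<lambda>xs. real (visits x xs))) z"
    by (simp add: path_exp_visits_Suc step_op_scale algebra_simps)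
  also have "\<dots> \<le> \<delta> * indicator {x} z + T D z"
    using step_op_mono[OF IH] by simp
  also have "\<dots> \<le> (\<Sum>j<L. (T ^^ (Suc n + j)) f z - (T ^^ j) f z)"
    using telescope visit by simp
  finally show ?case unfolding f_def .
qed (simp add: visits_def)

lemma funpow_abs_h_ge_of_reach:
  assumes "c \<le> \<bar>h w - h x\<bar>" "0 \<le> q" "q \<le> (T ^^ t) (indicator {w}) x" "t \<le> t'"
  shows "c * q \<le> (T ^^ t') (\<lambda>w. \<bar>h w - h x\<bar>) x"
proof -
  have "c * q \<le> \<bar>h w - h x\<bar> * (T ^^ t) (indicator {w}) x"
    using assms by (intro mult_mono) auto
  also have "\<dots> \<le> (T ^^ t) (\<lambda>w. \<bar>h w - h x\<bar>) x"
    by (rule funpow_step_op_indicator_le) simp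
  also have "\<dots> \<le> (T ^^ t') (\<lambda>w. \<bar>h w - h x\<bar>) x"
    by (rule funpow_abs_h_mono[OF \<open>t \<le> t'\<close>])
  finally show ?thesis .
qed

text \<open>From \<open>x\<close> the walk reaches, with probability \<open>\<ge> p\<^sup>2\<close> within \<open>2S\<close> steps, a site where \<open>h\<close>
  differs from \<open>h x\<close> by \<open>c\<^sub>0/2\<close>: either the gap at level \<open>k + 1\<close> or, via a step up and back, one
  at level \<open>k\<close>.\<close>
lemma funpow_abs_h_spread:
  assumes gap: "\<And>n. \<exists>i j. mm (n + 1) $ i - mm n $ j \<ge> c0"
    and up: "\<And>k i j. \<exists>s<S. (T ^^ Suc s) (indicator {(k + 1, j)}) (k, i) \<ge> p"
    and down: "\<And>k i j. \<exists>s<S. (T ^^ Suc s) (indicator {(k - 1, j)}) (k, i) \<ge> p"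
    and "p > 0"
  shows "c0 / 2 * p\<^sup>2 \<le> (T ^^ (2 * S)) (\<lambda>w. \<bar>h w - h x\<bar>) x"
proof -
  obtain k y where x: "x = (k, y)" by fastforce
  have "p \<le> 1"
    using up[of k y y] funpow_step_op_indicator_le_1 by (meson order_trans)
  then have "p\<^sup>2 \<le> p" using \<open>p > 0\<close> by (simp add: power2_eq_square mult_left_le)
  obtain i j where ij: "mm (k + 1) $ i - mm k $ j \<ge> c0" using gap by blast
  show ?thesis
  proof (cases "\<bar>mm (k + 1) $ i - mm k $ y\<bar> \<ge> c0 / 2")
    case True
    obtain s where "s < S" "(T ^^ Suc s) (indicator {(k + 1, i)}) x \<ge> p"
      using up x by blast
    with True \<open>p\<^sup>2 \<le> p\<close> show ?thesis
      by (intro funpow_abs_h_ge_of_reach[where w="(k + 1, i)" and t="Suc s"]) (auto simp: h_def x)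
  next
    case False
    then have far: "\<bar>mm k $ j - mm k $ y\<bar> \<ge> c0 / 2" using ij by linarith
    obtain s1 where s1: "s1 < S" "(T ^^ Suc s1) (indicator {(k + 1, y)}) x \<ge> p"
      using up x by blast
    obtain s2 where s2: "s2 < S" "(T ^^ Suc s2) (indicator {(k, j)}) (k + 1, y) \<ge> p"
      using down[where k="k + 1" and i=y and j=j] by auto
    have "p * p \<le> (T ^^ Suc s1) (indicator {(k + 1, y)}) x * (T ^^ Suc s2) (indicator {(k, j)}) (k + 1, y)"
      using s1 s2 \<open>p > 0\<close> by (intro mult_mono) auto
    also have "\<dots> \<le> (T ^^ (Suc s1 + Suc s2)) (indicator {(k, j)}) x"
      by (rule funpow_step_op_indicator_chain)
    finally show ?thesis
      using far s1(1) s2(1)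
      by (intro funpow_abs_h_ge_of_reach[where w="(k, j)" and t="Suc s1 + Suc s2"])
        (auto simp: h_def x power2_eq_square)
  qed
qed

lemma sum_increments_le_sqrt:
  assumes "n \<ge> 1"
  shows "(\<Sum>j<L. (T ^^ (n + j)) (\<lambda>w. \<bar>h w - c\<bar>) z - (T ^^ j) (\<lambda>w. \<bar>h w - c\<bar>) z)
           \<le> real L * (2 * K * sqrt (1 + real L) * sqrt (real n))"
proof -
  have "(T ^^ (n + j)) (\<lambda>w. \<bar>h w - c\<bar>) z - (T ^^ j) (\<lambda>w. \<bar>h w - c\<bar>) z
      \<le> 2 * K * sqrt (1 + real L) * sqrt (real n)" if "j < L" for j
  proof -
    have "real L * 1 \<le> real L * real n"
      using assms by (intro mult_left_mono) auto
    with \<open>j < L\<close> have "real j \<le> real L * real n"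
      by linarith
    then have "real (n + j) \<le> (1 + real L) * real n" and "real j \<le> (1 + real L) * real n"
      by (simp_all add: distrib_right)
    then have "sqrt (real (n + j)) \<le> sqrt (1 + real L) * sqrt (real n)"
      and "sqrt (real j) \<le> sqrt (1 + real L) * sqrt (real n)"
      by (simp_all only: real_sqrt_le_mono flip: real_sqrt_mult)
    then have "K * (sqrt (real (n + j)) + sqrt (real j)) \<le> K * (2 * (sqrt (1 + real L) * sqrt (real n)))"
      by (intro mult_left_mono K_nonneg) simp
    with funpow_abs_h_increment[of "n + j" c z j] show ?thesis
      by (simp add: ac_simps)
  qed
  then have "(\<Sum>j<L. (T ^^ (n + j)) (\<lambda>w. \<bar>h w - c\<bar>) z - (T ^^ j) (\<lambda>w. \<bar>h w - c\<bar>) z)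
      \<le> real (card {..<L}) * (2 * K * sqrt (1 + real L) * sqrt (real n))"
    by (intro sum_bounded_above) auto
  then show ?thesis
    by simp
qed

lemma expected_visits_le_sqrt:
  assumes "c0 > 0"
    and gap: "\<And>n. \<exists>i j. mm (n + 1) $ i - mm n $ j \<ge> c0"
    and up: "\<And>k i j. \<exists>s<S. (T ^^ Suc s) (indicator {(k + 1, j)}) (k, i) \<ge> p"
    and down: "\<And>k i j. \<exists>s<S. (T ^^ Suc s) (indicator {(k - 1, j)}) (k, i) \<ge> p"
    and "p > 0"
  obtains C where "\<And>z x n. E z n (\<lambda>xs. real (visits x xs)) \<le> C * sqrt (real n)"
proof
  define L where "L = 2 * S"
  define \<delta> where "\<delta> = c0 / 2 * p\<^sup>2"
  have "\<delta> > 0" unfolding \<delta>_def using \<open>c0 > 0\<close> \<open>p > 0\<close> by simp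
  fix z x n
  show "E z n (\<lambda>xs. real (visits x xs)) \<le> real L * (2 * K * sqrt (1 + real L)) / \<delta> * sqrt (real n)"
  proof (cases "n = 0")
    case False
    have "\<delta> * E z n (\<lambda>xs. real (visits x xs))
        \<le> (\<Sum>j<L. (T ^^ (n + j)) (\<lambda>w. \<bar>h w - h x\<bar>) z - (T ^^ j) (\<lambda>w. \<bar>h w - h x\<bar>) z)"
      unfolding L_def \<delta>_def
      by (intro visits_le_increment_sum funpow_abs_h_spread[OF gap up down \<open>p > 0\<close>])
    also have "\<dots> \<le> real L * (2 * K * sqrt (1 + real L) * sqrt (real n))"
      using False by (intro sum_increments_le_sqrt) simp
    finally show ?thesis
      using \<open>\<delta> > 0\<close> by (simp add: field_simps)
  qed (simp add: visits_def)
qed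

end

theorem lemma6p3:
  fixes P Q R \<zeta> \<zeta>m :: "'m::finite env"
    and mm \<rho> :: "int \<Rightarrow> real^'m"
    and a \<epsilon>b C_P K' :: real and k0 :: nat
  assumes nonneg: "\<And>n i j. P n $ i $ j \<ge> 0 \<and> Q n $ i $ j \<ge> 0 \<and> R n $ i $ j \<ge> 0"
    and rowsum: "\<And>n. (P n + Q n + R n) *v one_vec = one_vec"
    (* ellipticity *)
    and eps_pos: "\<epsilon>b > 0"
    and ell_R: "\<And>n. mnorm (mpow (R n) k0) \<le> 1 - \<epsilon>b"
    and ell_P: "\<And>n i j. (matrix_inv (mat 1 - R n) ** P n) $ i $ j \<ge> \<epsilon>b"
    and ell_Q: "\<And>n i j. (matrix_inv (mat 1 - R n) ** Q n) $ i $ j \<ge> \<epsilon>b"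
    (* bounded potential *)
    and zeta_lim: "\<And>S n. (\<And>a. stochastic (S a)) \<Longrightarrow>
                     ((\<lambda>a. psi_seq P Q R S a (nat (n - a))) \<longlongrightarrow> \<zeta> n) at_bot"
    and pot_pos: "\<And>n::int. n \<ge> 1 \<Longrightarrow> \<bar>ln (mnorm (rprod (Amat Q R \<zeta>) n (nat n)))\<bar> \<le> C_P"
    and pot_neg: "\<And>n::int. n \<le> -1 \<Longrightarrow> \<bar>ln (mnorm (rprod (Amat Q R \<zeta>) 0 (nat (- n))))\<bar> \<le> C_P"
    (* the vectors \<mm>_n *)
    and mm_eq: "\<And>n. mm n = P n *v mm (n + 1) + R n *v mm n + Q n *v mm (n - 1)"
    and mm_lip: "\<And>n' n'' i' i''. \<bar>n' - n''\<bar> \<le> 1 \<Longrightarrow> \<bar>mm n' $ i' - mm n'' $ i''\<bar> \<le> K'"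
    and mm_top: "((\<lambda>n. (\<Sum>j\<in>UNIV. mm n $ j) / real_of_int n) \<longlongrightarrow> real CARD('m)) at_top"
    and mm_bot: "((\<lambda>n. (\<Sum>j\<in>UNIV. mm n $ j) / real_of_int n) \<longlongrightarrow> real CARD('m)) at_bot"
    (* \<zeta>^- *)
    and zm_stoch: "\<And>n. stochastic (\<zeta>m n)"
    and zm_eq: "\<And>n. \<zeta>m n = matrix_inv (mat 1 - R n - P n ** \<zeta>m (n + 1)) ** Q n"
    and zm_unique: "\<And>Z. (\<And>n. stochastic (Z n)) \<Longrightarrow>
                     (\<And>n. Z n = matrix_inv (mat 1 - R n - P n ** Z (n + 1)) ** Q n) \<Longrightarrow> Z = \<zeta>m"
    (* the row vectors \<rho>_n *)
    and rho_pos: "\<And>n i. \<rho> n $ i > 0"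
    and rho_bdd: "\<exists>B. \<forall>n i. \<rho> n $ i \<le> B"
    and rho_eq: "\<And>n. \<rho> n = \<rho> (n - 1) v* P (n - 1) + \<rho> n v* R n + \<rho> (n + 1) v* Q (n + 1)"
    and rho_alpha: "\<And>n. \<rho> n = \<rho> (n + 1) v* alpha_mat Q R \<zeta> n"
    and rho_norm: "\<And>n. (\<rho> n v* P n) \<bullet> (mm (n + 1) - \<zeta>m (n + 1) *v mm n) = 1 / (2 * real CARD('m))"
    and a_top: "((\<lambda>N. partial_sum (\<lambda>n. \<rho> n \<bullet> one_vec) N / real_of_int \<bar>N\<bar>) \<longlongrightarrow> a) at_top"
    and a_bot: "((\<lambda>N. partial_sum (\<lambda>n. \<rho> n \<bullet> one_vec) N / real_of_int \<bar>N\<bar>) \<longlongrightarrow> a) at_bot"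
    and K_pos: "K > 0"
  shows "\<forall>e>0. \<exists>M. \<forall>N::nat. \<forall>z::int \<times> 'm. \<forall>k::int. \<forall>y::'m.
           N \<ge> 1 \<longrightarrow> real_of_int \<bar>k\<bar> \<le> K * sqrt (real N) \<longrightarrow>
           exp_visits P Q R z N (k, y)
             (\<lambda>v. if v / sqrt (real N) > M then v / sqrt (real N) else 0) \<le> e"
proof -
  interpret harmonic_strip_walk P Q R mm K'
    using nonneg rowsum mm_eq mm_lip by unfold_locales auto
  have R_rows: "(mpow (R n) k0 *v one_vec) $ i \<le> 1 - \<epsilon>b" for n i
    using row_sum_le_mnorm ell_R by (rule order_trans)
  obtain p S where "p > 0"
    and up: "\<And>k i j. \<exists>s<S. (T ^^ Suc s) (indicator {(k + 1, j)}) (k, i) \<ge> p"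
    and down: "\<And>k i j. \<exists>s<S. (T ^^ Suc s) (indicator {(k - 1, j)}) (k, i) \<ge> p"
    using uniform_neighbour_reach[OF eps_pos R_rows ell_P ell_Q] by blast
  obtain B where "\<And>n i. \<rho> n $ i \<le> B"
    using rho_bdd by blast
  then obtain c0 where "c0 > 0" and gap: "\<And>n. \<exists>i j. mm (n + 1) $ i - mm n $ j \<ge> c0"
    using increment_gap[OF zm_stoch rho_pos _ rho_norm] by blast
  obtain C where "\<And>z x n. E z n (\<lambda>xs. real (visits x xs)) \<le> C * sqrt (real n)"
    using expected_visits_le_sqrt[OF \<open>c0 > 0\<close> gap up down \<open>p > 0\<close>] by blast
  then have "\<forall>e>0. \<exists>M. \<forall>N z x. N \<ge> 1 \<longrightarrow>
      exp_visits P Q R z N x (\<lambda>v. if v / sqrt (real N) > M then v / sqrt (real N) else 0) \<le> e"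
    by (rule visits_uniformly_integrable)
  then show ?thesis
    by blast
qed

end
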